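(* Let $0\to C\to B\to A\to 0$ be a short exact sequence of abelian groups, with the groups and the maps definable in some structure. Assume that $C$ is finite, and that, for $n$ the exponent of $C$, the group $A/nA$ is finite and the $n$-torsion subgroup $A[n]$ of $A$ is finite. Then there is a definable group homomorphism $A\to B$ with finite kernel and with image of finite index in $B$. *)

theory Defs
  imports "HOL-Algebra.Algebra"
begin

definition tuples :: "nat \<Rightarrow> 'm list set" where
  "tuples n = {x. length x = n}"

text \<open>A first-order structure on the universe 'm, presented (following van den Dries)
  by its families of definable sets (with parameters): S n is the collection of
  definable subsets of M^n.\<close>
definition structure_on :: "(nat \<Rightarrow> 'm list set set) \<Rightarrow> bool" where
  "structure_on S \<longleftrightarrow>
     (\<forall>n. S n \<subseteq> Pow (tuples n)) \<and>
     (\<forall>n. {} \<in> S n) \<and>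
     (\<forall>n A B. A \<in> S n \<longrightarrow> B \<in> S n \<longrightarrow> A \<union> B \<in> S n) \<and>
     (\<forall>n A. A \<in> S n \<longrightarrow> tuples n - A \<in> S n) \<and>
     (\<forall>n A. A \<in> S n \<longrightarrow> {x @ [y] | x y. x \<in> A} \<in> S (Suc n)
                        \<and> {y # x | x y. x \<in> A} \<in> S (Suc n)) \<and>
     (\<forall>n i j. i < n \<longrightarrow> j < n \<longrightarrow> {x \<in> tuples n. x ! i = x ! j} \<in> S n) \<and>
     (\<forall>n A. A \<in> S (Suc n) \<longrightarrow> butlast ` A \<in> S n) \<and>
     (\<forall>a. {[a]} \<in> S 1)"

definition definable_group ::
  "(nat \<Rightarrow> 'm list set set) \<Rightarrow> nat \<Rightarrow> ('m list, 'b) monoid_scheme \<Rightarrow> bool" where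
  "definable_group S k G \<longleftrightarrow>
     carrier G \<subseteq> tuples k \<and> carrier G \<in> S k \<and>
     {x @ y @ z | x y z. x \<in> carrier G \<and> y \<in> carrier G \<and> z = x \<otimes>\<^bsub>G\<^esub> y} \<in> S (3 * k)"

definition definable_map ::
  "(nat \<Rightarrow> 'm list set set) \<Rightarrow> nat \<Rightarrow> nat \<Rightarrow> ('m list, 'b) monoid_scheme
     \<Rightarrow> ('m list \<Rightarrow> 'm list) \<Rightarrow> bool" where
  "definable_map S k l G f \<longleftrightarrow>
     {x @ y | x y. x \<in> carrier G \<and> y = f x} \<in> S (k + l)"

definition group_exponent :: "('a, 'b) monoid_scheme \<Rightarrow> nat" where
  "group_exponent G = (LEAST n. 0 < n \<and> (\<forall>x \<in> carrier G. x [^]\<^bsub>G\<^esub> n = \<one>\<^bsub>G\<^esub>))"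

text \<open>nA (multiplicative notation: n-th powers) and the n-torsion A[n].\<close>
definition mult_subgroup :: "('a, 'b) monoid_scheme \<Rightarrow> nat \<Rightarrow> 'a set" where
  "mult_subgroup G n = (\<lambda>x. x [^]\<^bsub>G\<^esub> n) ` carrier G"

definition torsion_subgroup :: "('a, 'b) monoid_scheme \<Rightarrow> nat \<Rightarrow> 'a set" where
  "torsion_subgroup G n = {x \<in> carrier G. x [^]\<^bsub>G\<^esub> n = \<one>\<^bsub>G\<^esub>}"

end

theory Submission
  imports Defs "HOL-Algebra.Multiplicative_Group"
begin

(*
  Let n be the exponent of C. Since the kernel g(C) of f is killed by n, the power b^n of
  b \<in> B depends only on f(b); hence h(f(b)) = b^n defines a homomorphism h : A \<rightarrow> B. Its kernel
  lies in the torsion A[n], and its image is nB, which has finite index in B because B is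
  covered by the cosets of nB through the finitely many elements c \<cdot> b\<^sub>t, where c \<in> g(C) and
  the f(b\<^sub>t) represent A/nA. The graph of h is the image of B under b \<mapsto> (f(b), b^n), and the
  graph of the power map is definable by induction on the exponent, so h is definable.
*)

definition subtuple :: "(nat \<Rightarrow> nat) \<Rightarrow> nat \<Rightarrow> 'a list \<Rightarrow> 'a list" where
  "subtuple \<sigma> n w = map (\<lambda>i. w ! \<sigma> i) [0..<n]"

lemma tuples_add_iff: "u \<in> tuples (p + q) \<longleftrightarrow> (\<exists>x y. u = x @ y \<and> x \<in> tuples p \<and> y \<in> tuples q)"
proof
  assume "u \<in> tuples (p + q)"
  then show "\<exists>x y. u = x @ y \<and> x \<in> tuples p \<and> y \<in> tuples q"
    by (intro exI[of _ "take p u"] exI[of _ "drop p u"]) (simp add: tuples_def)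
qed (auto simp: tuples_def)

lemma tuples_0: "tuples 0 = {[]}"
  by (auto simp: tuples_def)

lemma subtuple_eqI:
  "length L = n \<Longrightarrow> (\<And>i. i < n \<Longrightarrow> w ! \<sigma> i = L ! i) \<Longrightarrow> subtuple \<sigma> n w = L"
  unfolding subtuple_def by (intro nth_equalityI) auto

section \<open>Definable sets\<close>

lemma definable_subset_tuples: "structure_on S \<Longrightarrow> D \<in> S n \<Longrightarrow> D \<subseteq> tuples n"
  unfolding structure_on_def by auto

lemma definable_empty: "structure_on S \<Longrightarrow> {} \<in> S n"
  unfolding structure_on_def by simp

lemma definable_Un: "structure_on S \<Longrightarrow> D \<in> S n \<Longrightarrow> E \<in> S n \<Longrightarrow> D \<union> E \<in> S n"
  unfolding structure_on_def by simp

lemma definable_complement: "structure_on S \<Longrightarrow> D \<in> S n \<Longrightarrow> tuples n - D \<in> S n"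
  unfolding structure_on_def by simp

lemma definable_Cons_image: "structure_on S \<Longrightarrow> D \<in> S n \<Longrightarrow> {y # x |x y. x \<in> D} \<in> S (Suc n)"
  unfolding structure_on_def by simp

lemma definable_butlast_image: "structure_on S \<Longrightarrow> D \<in> S (Suc n) \<Longrightarrow> butlast ` D \<in> S n"
  unfolding structure_on_def by simp

lemma definable_diagonal:
  "structure_on S \<Longrightarrow> i < n \<Longrightarrow> j < n \<Longrightarrow> {x \<in> tuples n. x ! i = x ! j} \<in> S n"
  unfolding structure_on_def by simp

lemma definable_tuples: "structure_on S \<Longrightarrow> tuples n \<in> S n"
  using definable_complement[of S "{}" n] definable_empty[of S n] by simp

lemma definable_Int:
  assumes "structure_on S" "D \<in> S n" "E \<in> S n"
  shows "D \<inter> E \<in> S n"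
proof -
  have "D \<inter> E = tuples n - ((tuples n - D) \<union> (tuples n - E))"
    using definable_subset_tuples[OF assms(1,2)] by blast
  then show ?thesis
    using assms by (simp add: definable_complement definable_Un)
qed

lemma definable_cylinder:
  assumes S: "structure_on S" and D: "D \<in> S n"
  shows "{w \<in> tuples (m + n). drop m w \<in> D} \<in> S (m + n)"
proof (induction m)
  case 0
  have "{w \<in> tuples n. w \<in> D} = D"
    using definable_subset_tuples[OF S D] by blast
  then show ?case
    using D by simp
next
  case (Suc m)
  have "{w \<in> tuples (Suc m + n). drop (Suc m) w \<in> D}
      = {y # x |x y. x \<in> {w \<in> tuples (m + n). drop m w \<in> D}}"
    by (auto simp: tuples_def length_Suc_conv)
  moreover have "{y # x |x y. x \<in> {w \<in> tuples (m + n). drop m w \<in> D}} \<in> S (Suc (m + n))"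
    using definable_Cons_image[OF S Suc] by simp
  ultimately show ?case by simp
qed

lemma definable_projection:
  assumes S: "structure_on S"
  shows "D \<in> S (m + k) \<Longrightarrow> {u. \<exists>z. length z = k \<and> u @ z \<in> D} \<in> S m"
proof (induction k arbitrary: D)
  case 0
  then show ?case by simp
next
  case (Suc k)
  have butlast: "butlast ` D \<in> S (m + k)"
    using definable_butlast_image[OF S] Suc.prems by simp
  have "{u. \<exists>z. length z = k \<and> u @ z \<in> butlast ` D} = {u. \<exists>z. length z = Suc k \<and> u @ z \<in> D}"
  proof (rule Set.set_eqI, rule iffI)
    fix u assume "u \<in> {u. \<exists>z. length z = k \<and> u @ z \<in> butlast ` D}"
    then obtain z v where v: "length z = k" "v \<in> D" "u @ z = butlast v" by auto
    have "v \<noteq> []"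
      using definable_subset_tuples[OF S Suc.prems] v(2) by (auto simp: tuples_def)
    then have "u @ (z @ [last v]) = v"
      using v(3) by (metis append_assoc append_butlast_last_id)
    then show "u \<in> {u. \<exists>z. length z = Suc k \<and> u @ z \<in> D}"
      using v by (intro CollectI exI[of _ "z @ [last v]"]) simp
  next
    fix u assume "u \<in> {u. \<exists>z. length z = Suc k \<and> u @ z \<in> D}"
    then obtain z where z: "length z = Suc k" "u @ z \<in> D" by auto
    then have "butlast (u @ z) = u @ butlast z"
      by (cases z) (simp_all add: butlast_append)
    then show "u \<in> {u. \<exists>z. length z = k \<and> u @ z \<in> butlast ` D}"
      using z by (intro CollectI exI[of _ "butlast z"]) (auto intro!: image_eqI[of _ _ "u @ z"])
  qed
  then show ?case
    using Suc.IH[OF butlast] by simp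
qed

lemma definable_diagonals:
  assumes S: "structure_on S" and \<sigma>: "\<forall>i<n. \<sigma> i < m"
  shows "{w \<in> tuples (m + n). \<forall>i<n. w ! (m + i) = w ! \<sigma> i} \<in> S (m + n)"
proof -
  have "{w \<in> tuples (m + n). \<forall>i<l. w ! (m + i) = w ! \<sigma> i} \<in> S (m + n)" if "l \<le> n" for l
    using that
  proof (induction l)
    case 0
    then show ?case using definable_tuples[OF S] by simp
  next
    case (Suc l)
    have "l < n"
      using Suc.prems by simp
    then have "m + l < m + n" "\<sigma> l < m + n"
      using \<sigma> by (auto intro: trans_less_add1)
    then have "{w \<in> tuples (m + n). w ! (m + l) = w ! \<sigma> l} \<in> S (m + n)"
      by (rule definable_diagonal[OF S])
    from definable_Int[OF S Suc.IH[OF Suc_leD[OF Suc.prems]] this]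
    show ?case
      by (rule back_subst) (auto simp: less_Suc_eq)
  qed
  then show ?thesis by simp
qed

text \<open>Extend \<open>u\<close> by its selected coordinates using diagonals, intersect with a cylinder
  over \<open>D\<close>, and project the extension away.\<close>

lemma definable_subtuple_preimage:
  assumes S: "structure_on S" and D: "D \<in> S n" and \<sigma>: "\<forall>i<n. \<sigma> i < m"
  shows "{u \<in> tuples m. subtuple \<sigma> n u \<in> D} \<in> S m"
proof -
  let ?E = "{w \<in> tuples (m + n). drop m w \<in> D} \<inter> {w \<in> tuples (m + n). \<forall>i<n. w ! (m + i) = w ! \<sigma> i}"
  have E: "?E \<in> S (m + n)"
    using definable_Int[OF S definable_cylinder[OF S D] definable_diagonals[OF S \<sigma>]] .
  have "{u. \<exists>z. length z = n \<and> u @ z \<in> ?E} = {u \<in> tuples m. subtuple \<sigma> n u \<in> D}"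
  proof (rule Set.set_eqI, rule iffI)
    fix u assume "u \<in> {u. \<exists>z. length z = n \<and> u @ z \<in> ?E}"
    then obtain z where z: "length z = n" "u @ z \<in> tuples (m + n)" "drop m (u @ z) \<in> D"
      "\<forall>i<n. (u @ z) ! (m + i) = (u @ z) ! \<sigma> i" by auto
    then have "length u = m" by (simp add: tuples_def)
    moreover have "subtuple \<sigma> n u = z"
      using z \<open>length u = m\<close> \<sigma> by (intro subtuple_eqI) (auto simp: nth_append)
    ultimately show "u \<in> {u \<in> tuples m. subtuple \<sigma> n u \<in> D}"
      using z by (simp add: tuples_def)
  next
    fix u assume u: "u \<in> {u \<in> tuples m. subtuple \<sigma> n u \<in> D}"
    then have "u @ subtuple \<sigma> n u \<in> ?E"
      using \<sigma> by (auto simp: tuples_def nth_append subtuple_def)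
    moreover have "length (subtuple \<sigma> n u) = n"
      by (simp add: subtuple_def)
    ultimately show "u \<in> {u. \<exists>z. length z = n \<and> u @ z \<in> ?E}"
      by blast
  qed
  then show ?thesis
    using definable_projection[OF S E] by metis
qed

lemma definable_join:
  assumes S: "structure_on S" and D: "D \<in> S a" and E: "E \<in> S b"
    and \<sigma>: "\<forall>i<a. \<sigma> i < m + k" and \<tau>: "\<forall>i<b. \<tau> i < m + k"
  shows "{u \<in> tuples m. \<exists>z\<in>tuples k. subtuple \<sigma> a (u @ z) \<in> D \<and> subtuple \<tau> b (u @ z) \<in> E} \<in> S m"
proof -
  let ?T = "{w \<in> tuples (m + k). subtuple \<sigma> a w \<in> D} \<inter> {w \<in> tuples (m + k). subtuple \<tau> b w \<in> E}"
  have T: "?T \<in> S (m + k)"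
    using definable_Int[OF S definable_subtuple_preimage[OF S D \<sigma>] definable_subtuple_preimage[OF S E \<tau>]] .
  have "{u. \<exists>z. length z = k \<and> u @ z \<in> ?T}
      = {u \<in> tuples m. \<exists>z\<in>tuples k. subtuple \<sigma> a (u @ z) \<in> D \<and> subtuple \<tau> b (u @ z) \<in> E}"
  proof (rule Set.set_eqI, rule iffI)
    fix u assume "u \<in> {u. \<exists>z. length z = k \<and> u @ z \<in> ?T}"
    then obtain z where "length z = k" "u @ z \<in> ?T" by blast
    then show "u \<in> {u \<in> tuples m. \<exists>z\<in>tuples k. subtuple \<sigma> a (u @ z) \<in> D \<and> subtuple \<tau> b (u @ z) \<in> E}"
      unfolding tuples_def by auto
  next
    fix u assume "u \<in> {u \<in> tuples m. \<exists>z\<in>tuples k. subtuple \<sigma> a (u @ z) \<in> D \<and> subtuple \<tau> b (u @ z) \<in> E}"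
    then obtain z where "u \<in> tuples m" "z \<in> tuples k"
      "subtuple \<sigma> a (u @ z) \<in> D" "subtuple \<tau> b (u @ z) \<in> E" by blast
    then show "u \<in> {u. \<exists>z. length z = k \<and> u @ z \<in> ?T}"
      unfolding tuples_def by auto
  qed
  then show ?thesis
    using definable_projection[OF S T] by metis
qed

section \<open>Definable graphs\<close>

definition graph_on :: "'a list set \<Rightarrow> ('a list \<Rightarrow> 'a list) \<Rightarrow> 'a list set" where
  "graph_on D F = {x @ y |x y. x \<in> D \<and> y = F x}"

definition mult_graph :: "('a list, 'b) monoid_scheme \<Rightarrow> 'a list set" where
  "mult_graph G = {x @ y @ z |x y z. x \<in> carrier G \<and> y \<in> carrier G \<and> z = x \<otimes>\<^bsub>G\<^esub> y}"

lemma append_in_graph_on_iff: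
  "D \<subseteq> tuples p \<Longrightarrow> x \<in> tuples p \<Longrightarrow> x @ y \<in> graph_on D F \<longleftrightarrow> x \<in> D \<and> y = F x"
  unfolding graph_on_def tuples_def by auto

lemma append_in_mult_graph_iff:
  assumes "carrier G \<subseteq> tuples k" "x \<in> tuples k" "y \<in> tuples k"
  shows "x @ y @ z \<in> mult_graph G \<longleftrightarrow> x \<in> carrier G \<and> y \<in> carrier G \<and> z = x \<otimes>\<^bsub>G\<^esub> y"
proof
  assume "x @ y @ z \<in> mult_graph G"
  then obtain x' y' where "x @ y @ z = x' @ y' @ x' \<otimes>\<^bsub>G\<^esub> y'" "x' \<in> carrier G" "y' \<in> carrier G"
    unfolding mult_graph_def by blast
  moreover from this have "x' \<in> tuples k" "y' \<in> tuples k"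
    using assms(1) by auto
  ultimately show "x \<in> carrier G \<and> y \<in> carrier G \<and> z = x \<otimes>\<^bsub>G\<^esub> y"
    using assms(2,3) by (simp add: tuples_def)
qed (auto simp: mult_graph_def)

lemma graph_on_eqI:
  assumes "D \<subseteq> tuples p" "F ` D \<subseteq> tuples q" "R \<subseteq> tuples (p + q)"
    and "\<And>x y. x \<in> tuples p \<Longrightarrow> y \<in> tuples q \<Longrightarrow> x @ y \<in> R \<longleftrightarrow> x \<in> D \<and> y = F x"
  shows "graph_on D F = R"
proof (rule Set.set_eqI, rule iffI)
  fix u assume "u \<in> graph_on D F"
  then obtain x where "x \<in> D" "u = x @ F x"
    unfolding graph_on_def by blast
  then show "u \<in> R"
    using assms(1,2,4) by blast
next
  fix u assume "u \<in> R"
  then obtain x y where "u = x @ y" "x \<in> tuples p" "y \<in> tuples q"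
    using assms(3) tuples_add_iff by blast
  then show "u \<in> graph_on D F"
    using \<open>u \<in> R\<close> assms(4) unfolding graph_on_def by blast
qed

lemma definable_map_iff_graph_on:
  "definable_map S k l G F \<longleftrightarrow> graph_on (carrier G) F \<in> S (k + l)"
  by (simp add: definable_map_def graph_on_def)

lemma graph_on_range:
  assumes S: "structure_on S" and F: "graph_on D F \<in> S (p + q)" and D: "D \<subseteq> tuples p"
  shows "F ` D \<subseteq> tuples q"
proof
  fix y assume "y \<in> F ` D"
  then obtain x where "x \<in> D" "y = F x" by blast
  then have "x @ y \<in> tuples (p + q)" "x \<in> tuples p"
    using definable_subset_tuples[OF S F] D by (auto simp: graph_on_def)
  then show "y \<in> tuples q"
    by (simp add: tuples_def)
qed

lemma definable_graph_one:
  fixes G :: "('a list, 'b) monoid_scheme" (structure)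
  assumes S: "structure_on S" and G: "definable_group S k G" "group G"
  shows "graph_on (carrier G) (\<lambda>x. \<one>) \<in> S (k + k)"
proof -
  interpret group G by (rule G(2))
  have carrier: "carrier G \<subseteq> tuples k" "carrier G \<in> S k" and mult: "mult_graph G \<in> S (3 * k)"
    using G(1) by (auto simp: definable_group_def mult_graph_def)
  \<comment> \<open>\<open>\<one>\<close> is the only \<open>y\<close> with \<open>y \<otimes> y = y\<close>\<close>
  let ?\<tau> = "\<lambda>i. if i < k then k + i else if i < k + k then i else i - k"
  let ?R = "{u \<in> tuples (k + k). \<exists>z\<in>tuples 0.
    subtuple (\<lambda>i. i) k (u @ z) \<in> carrier G \<and> subtuple ?\<tau> (3 * k) (u @ z) \<in> mult_graph G}"
  have "?R \<in> S (k + k)"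
    by (rule definable_join[OF S carrier(2) mult]) auto
  moreover have "graph_on (carrier G) (\<lambda>x. \<one>) = ?R"
  proof (rule graph_on_eqI[OF carrier(1)])
    show "(\<lambda>x. \<one>) ` carrier G \<subseteq> tuples k"
      using carrier(1) by auto
    fix x y :: "'a list" assume xy: "x \<in> tuples k" "y \<in> tuples k"
    have "subtuple (\<lambda>i. i) k (x @ y) = x" "subtuple ?\<tau> (3 * k) (x @ y) = y @ y @ y"
      using xy by (auto intro!: subtuple_eqI simp: tuples_def nth_append)
    moreover have "x @ y \<in> tuples (k + k)"
      using xy by (simp add: tuples_def)
    ultimately have "x @ y \<in> ?R \<longleftrightarrow> x \<in> carrier G \<and> y @ y @ y \<in> mult_graph G"
      by (simp add: tuples_0)
    also have "\<dots> \<longleftrightarrow> x \<in> carrier G \<and> y = \<one>"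
      unfolding append_in_mult_graph_iff[OF carrier(1) xy(2) xy(2)]
      by (metis one_closed r_cancel_one r_one)
    finally show "x @ y \<in> ?R \<longleftrightarrow> x \<in> carrier G \<and> y = \<one>" .
  qed blast
  ultimately show ?thesis
    by simp
qed

lemma definable_graph_mult_right:
  fixes G :: "('a list, 'b) monoid_scheme" (structure)
  assumes S: "structure_on S" and G: "definable_group S k G" "monoid G"
    and F: "graph_on (carrier G) F \<in> S (k + k)" and F_closed: "F ` carrier G \<subseteq> carrier G"
  shows "graph_on (carrier G) (\<lambda>x. F x \<otimes> x) \<in> S (k + k)"
proof -
  interpret monoid G by (rule G(2))
  have carrier: "carrier G \<subseteq> tuples k" and mult: "mult_graph G \<in> S (3 * k)"
    using G(1) by (auto simp: definable_group_def mult_graph_def)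
  let ?\<sigma> = "\<lambda>i. if i < k then i else i + k"
  let ?\<tau> = "\<lambda>i. if i < k then k + k + i else i - k"
  let ?R = "{u \<in> tuples (k + k). \<exists>z\<in>tuples k.
    subtuple ?\<sigma> (k + k) (u @ z) \<in> graph_on (carrier G) F \<and> subtuple ?\<tau> (3 * k) (u @ z) \<in> mult_graph G}"
  have "?R \<in> S (k + k)"
    by (rule definable_join[OF S F mult]) auto
  moreover have "graph_on (carrier G) (\<lambda>x. F x \<otimes> x) = ?R"
  proof (rule graph_on_eqI[OF carrier])
    show "(\<lambda>x. F x \<otimes> x) ` carrier G \<subseteq> tuples k"
      using carrier F_closed by (auto intro!: subsetD[OF carrier] m_closed)
    fix x y :: "'a list" assume xy: "x \<in> tuples k" "y \<in> tuples k"
    have "subtuple ?\<sigma> (k + k) (x @ y @ z) = x @ z" "subtuple ?\<tau> (3 * k) (x @ y @ z) = z @ x @ y"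
      if "z \<in> tuples k" for z
      using xy that by (auto intro!: subtuple_eqI simp: tuples_def nth_append)
    moreover have "x @ y \<in> tuples (k + k)"
      using xy by (simp add: tuples_def)
    ultimately have "x @ y \<in> ?R \<longleftrightarrow>
        (\<exists>z\<in>tuples k. x @ z \<in> graph_on (carrier G) F \<and> z @ x @ y \<in> mult_graph G)"
      by (simp cong: bex_cong)
    also have "\<dots> \<longleftrightarrow> x \<in> carrier G \<and> y = F x \<otimes> x"
      using F_closed carrier
      by (auto simp: append_in_graph_on_iff[OF carrier xy(1)] append_in_mult_graph_iff[OF carrier _ xy(1)])
    finally show "x @ y \<in> ?R \<longleftrightarrow> x \<in> carrier G \<and> y = F x \<otimes> x" .
  qed blast
  ultimately show ?thesis
    by simp
qed

lemma definable_pow_graph: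
  fixes G :: "('a list, 'b) monoid_scheme" (structure)
  assumes S: "structure_on S" and G: "definable_group S k G" "group G"
  shows "graph_on (carrier G) (\<lambda>x. x [^] (m::nat)) \<in> S (k + k)"
proof (induction m)
  case 0
  then show ?case
    using definable_graph_one[OF S G] by simp
next
  case (Suc m)
  interpret group G by (rule G(2))
  show ?case
    using definable_graph_mult_right[OF S G(1) is_monoid Suc] by (simp add: image_subset_iff)
qed

text \<open>The graph of \<open>H\<close> is the image of \<open>D\<close> under \<open>x \<mapsto> (F x, G x)\<close>.\<close>

lemma definable_graph_factor:
  fixes D :: "'a list set"
  assumes S: "structure_on S" and F: "graph_on D F \<in> S (p + q)" and G: "graph_on D G \<in> S (p + r)"
    and D: "D \<subseteq> tuples p" and E: "F ` D = E" and H: "\<And>x. x \<in> D \<Longrightarrow> H (F x) = G x"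
  shows "graph_on E H \<in> S (q + r)"
proof -
  let ?\<sigma> = "\<lambda>i. if i < p then q + r + i else i - p"
  let ?\<tau> = "\<lambda>i. if i < p then q + r + i else q + (i - p)"
  let ?R = "{u \<in> tuples (q + r). \<exists>z\<in>tuples p.
    subtuple ?\<sigma> (p + q) (u @ z) \<in> graph_on D F \<and> subtuple ?\<tau> (p + r) (u @ z) \<in> graph_on D G}"
  have "?R \<in> S (q + r)"
    by (rule definable_join[OF S F G]) auto
  moreover have "graph_on E H = ?R"
  proof (rule graph_on_eqI)
    show "E \<subseteq> tuples q"
      using graph_on_range[OF S F D] E by blast
    show "H ` E \<subseteq> tuples r"
      using graph_on_range[OF S G D] E H by auto
    fix e y :: "'a list" assume ey: "e \<in> tuples q" "y \<in> tuples r"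
    have "subtuple ?\<sigma> (p + q) (e @ y @ z) = z @ e" "subtuple ?\<tau> (p + r) (e @ y @ z) = z @ y"
      if "z \<in> tuples p" for z
      using ey that by (auto intro!: subtuple_eqI simp: tuples_def nth_append)
    moreover have "e @ y \<in> tuples (q + r)"
      using ey by (simp add: tuples_def)
    ultimately have "e @ y \<in> ?R \<longleftrightarrow> (\<exists>z\<in>tuples p. z @ e \<in> graph_on D F \<and> z @ y \<in> graph_on D G)"
      by (simp cong: bex_cong)
    also have "\<dots> \<longleftrightarrow> (\<exists>z\<in>D. e = F z \<and> y = G z)"
      using D by (auto simp: append_in_graph_on_iff[OF D])
    also have "\<dots> \<longleftrightarrow> e \<in> E \<and> y = H e"
      using E H by auto
    finally show "e @ y \<in> ?R \<longleftrightarrow> e \<in> E \<and> y = H e" .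
  qed blast
  ultimately show ?thesis
    by simp
qed

section \<open>Subgroups of \<open>n\<close>-th powers\<close>

lemma (in group) pow_group_exponent:
  assumes "finite (carrier G)" "x \<in> carrier G"
  shows "x [^] group_exponent G = \<one>"
proof -
  have "\<exists>m::nat. 0 < m \<and> (\<forall>x \<in> carrier G. x [^] m = \<one>)"
    using assms(1) order_gt_0_iff_finite pow_order_eq_1 by blast
  then have "0 < group_exponent G \<and> (\<forall>x \<in> carrier G. x [^] group_exponent G = \<one>)"
    unfolding group_exponent_def by (rule LeastI_ex)
  then show ?thesis
    using assms(2) by blast
qed

lemma (in group_hom) hom_image_pow_group_exponent:
  assumes "finite (carrier G)" "y \<in> h ` carrier G"
  shows "y [^]\<^bsub>H\<^esub> group_exponent G = \<one>\<^bsub>H\<^esub>"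
  using assms G.pow_group_exponent[OF assms(1)] by (auto simp flip: hom_nat_pow)

lemma (in comm_group) subgroup_mult_subgroup: "subgroup (mult_subgroup G n) G"
proof (rule subgroupI)
  show "mult_subgroup G n \<subseteq> carrier G" and "mult_subgroup G n \<noteq> {}"
    by (auto simp: mult_subgroup_def)
next
  fix a assume "a \<in> mult_subgroup G n"
  then obtain x where "x \<in> carrier G" "a = x [^] n" by (auto simp: mult_subgroup_def)
  then show "inv a \<in> mult_subgroup G n"
    by (auto simp: mult_subgroup_def nat_pow_inv intro!: image_eqI[of _ _ "inv x"])
next
  fix a b assume "a \<in> mult_subgroup G n" "b \<in> mult_subgroup G n"
  then obtain x y where "x \<in> carrier G" "a = x [^] n" "y \<in> carrier G" "b = y [^] n"
    by (auto simp: mult_subgroup_def)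
  then show "a \<otimes> b \<in> mult_subgroup G n"
    by (auto simp: mult_subgroup_def nat_pow_distrib intro!: image_eqI[of _ _ "x \<otimes> y"])
qed

lemma (in group) finite_rcosets_iff_covered:
  assumes "subgroup H G"
  shows "finite (rcosets H) \<longleftrightarrow>
    (\<exists>R. finite R \<and> R \<subseteq> carrier G \<and> carrier G \<subseteq> (\<Union>r\<in>R. H #> r))"
proof
  assume fin: "finite (rcosets H)"
  define R where "R = (\<lambda>K. SOME r. r \<in> K) ` (rcosets H)"
  have "carrier G \<subseteq> (\<Union>r\<in>R. H #> r)"
  proof
    fix a assume a: "a \<in> carrier G"
    let ?r = "SOME r. r \<in> H #> a"
    have "?r \<in> H #> a"
      using rcos_self[OF a assms] by (rule someI)
    then have "H #> a = H #> ?r"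
      using a assms by (rule repr_independence)
    moreover have "?r \<in> R"
      using a by (auto simp: R_def RCOSETS_def)
    ultimately show "a \<in> (\<Union>r\<in>R. H #> r)"
      using rcos_self[OF a assms] by auto
  qed
  moreover have "R \<subseteq> carrier G"
  proof
    fix r assume "r \<in> R"
    then obtain a where a: "a \<in> carrier G" and r: "r = (SOME r. r \<in> H #> a)"
      by (auto simp: R_def RCOSETS_def)
    have "r \<in> H #> a"
      unfolding r using rcos_self[OF a assms] by (rule someI)
    then show "r \<in> carrier G"
      using r_coset_subset_G[OF subgroup.subset[OF assms] a] by blast
  qed
  moreover have "finite R"
    using fin by (simp add: R_def)
  ultimately show "\<exists>R. finite R \<and> R \<subseteq> carrier G \<and> carrier G \<subseteq> (\<Union>r\<in>R. H #> r)"
    by blast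
next
  assume "\<exists>R. finite R \<and> R \<subseteq> carrier G \<and> carrier G \<subseteq> (\<Union>r\<in>R. H #> r)"
  then obtain R where R: "finite R" "R \<subseteq> carrier G" "carrier G \<subseteq> (\<Union>r\<in>R. H #> r)"
    by blast
  have "rcosets H \<subseteq> (\<lambda>r. H #> r) ` R"
  proof
    fix K assume "K \<in> rcosets H"
    then obtain a where a: "a \<in> carrier G" "K = H #> a" by (auto simp: RCOSETS_def)
    then obtain r where r: "r \<in> R" "a \<in> H #> r" using R(3) by blast
    then have "H #> r = H #> a" using R(2) assms by (intro repr_independence) auto
    then show "K \<in> (\<lambda>r. H #> r) ` R" using a r by auto
  qed
  then show "finite (rcosets H)" using R(1) finite_subset by blast
qed

lemma finite_rcosets_mult_subgroup_extension:
  assumes B: "comm_group B" and A: "comm_group A"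
    and f: "f \<in> hom B A" and f_surj: "f ` carrier B = carrier A"
    and fin_ker: "finite (kernel B A f)"
    and fin_A: "finite (rcosets\<^bsub>A\<^esub> (mult_subgroup A n))"
  shows "finite (rcosets\<^bsub>B\<^esub> (mult_subgroup B n))"
proof -
  interpret B: comm_group B by (rule B)
  interpret A: comm_group A by (rule A)
  interpret f: group_hom B A f
    by (simp add: group_hom_def group_hom_axioms_def A.group_axioms B.group_axioms f)
  obtain T where T: "finite T" "T \<subseteq> carrier A"
    and T_cover: "carrier A \<subseteq> (\<Union>t\<in>T. mult_subgroup A n #>\<^bsub>A\<^esub> t)"
    using fin_A unfolding A.finite_rcosets_iff_covered[OF A.subgroup_mult_subgroup] by blast
  have "\<forall>t\<in>T. \<exists>b. b \<in> carrier B \<and> f b = t"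
    using T(2) unfolding f_surj[symmetric] by blast
  then obtain pre where pre: "\<And>t. t \<in> T \<Longrightarrow> pre t \<in> carrier B \<and> f (pre t) = t"
    by metis
  define R where "R = (\<lambda>(k, t). k \<otimes>\<^bsub>B\<^esub> pre t) ` (kernel B A f \<times> T)"
  have "carrier B \<subseteq> (\<Union>r\<in>R. mult_subgroup B n #>\<^bsub>B\<^esub> r)"
  proof
    fix b assume b: "b \<in> carrier B"
    then have "f b \<in> carrier A" by simp
    then obtain t where t: "t \<in> T" "f b \<in> mult_subgroup A n #>\<^bsub>A\<^esub> t"
      using T_cover by blast
    then obtain a where "a \<in> carrier A" "f b = a [^]\<^bsub>A\<^esub> n \<otimes>\<^bsub>A\<^esub> t"
      unfolding r_coset_def mult_subgroup_def by blast
    moreover obtain x where x: "x \<in> carrier B" "f x = a"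
      using \<open>a \<in> carrier A\<close> unfolding f_surj[symmetric] by blast
    ultimately have fb: "f b = f (x [^]\<^bsub>B\<^esub> n) \<otimes>\<^bsub>A\<^esub> f (pre t)"
      using pre[OF t(1)] by (simp only: f.hom_nat_pow)
    define k where "k = inv\<^bsub>B\<^esub> (x [^]\<^bsub>B\<^esub> n) \<otimes>\<^bsub>B\<^esub> b \<otimes>\<^bsub>B\<^esub> inv\<^bsub>B\<^esub> pre t"
    have "f k = inv\<^bsub>A\<^esub> f (x [^]\<^bsub>B\<^esub> n) \<otimes>\<^bsub>A\<^esub> f b \<otimes>\<^bsub>A\<^esub> inv\<^bsub>A\<^esub> f (pre t)"
      using b x(1) pre[OF t(1)] by (simp add: k_def)
    also have "\<dots> = \<one>\<^bsub>A\<^esub>"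
      unfolding fb using x(1) pre[OF t(1)] T(2) t(1) by (auto simp: A.m_assoc[symmetric])
    finally have "k \<in> kernel B A f"
      using b x(1) pre[OF t(1)] by (simp add: k_def kernel_def)
    then have "k \<otimes>\<^bsub>B\<^esub> pre t \<in> R"
      using t(1) by (force simp: R_def)
    moreover have "b = x [^]\<^bsub>B\<^esub> n \<otimes>\<^bsub>B\<^esub> (k \<otimes>\<^bsub>B\<^esub> pre t)"
      using b x(1) pre[OF t(1)] by (simp add: k_def B.m_assoc[symmetric]) (simp add: B.m_assoc)
    ultimately show "b \<in> (\<Union>r\<in>R. mult_subgroup B n #>\<^bsub>B\<^esub> r)"
      using x(1) unfolding r_coset_def mult_subgroup_def by blast
  qed
  moreover have "R \<subseteq> carrier B" and "finite R"
    using pre fin_ker T(1) by (auto simp: R_def kernel_def)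
  ultimately show ?thesis
    using B.finite_rcosets_iff_covered[OF B.subgroup_mult_subgroup] by blast
qed

section \<open>Lifting \<open>n\<close>-th powers through a surjective homomorphism\<close>

locale power_lift =
  B: comm_group B + A: group A
  for B :: "('b, 'c) monoid_scheme" (structure) and A :: "('a, 'd) monoid_scheme" (structure) +
  fixes f :: "'b \<Rightarrow> 'a" and n :: nat
  assumes f_hom: "f \<in> hom B A"
    and f_surj: "f ` carrier B = carrier A"
    and kernel_pow_eq_one: "x \<in> kernel B A f \<Longrightarrow> x [^]\<^bsub>B\<^esub> n = \<one>\<^bsub>B\<^esub>"
begin

sublocale f: group_hom B A f
  by (simp add: group_hom_def group_hom_axioms_def A.group_axioms B.group_axioms f_hom)

definition pow_lift :: "'a \<Rightarrow> 'b" where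
  "pow_lift a = (SOME b. b \<in> carrier B \<and> f b = a) [^]\<^bsub>B\<^esub> n"

lemma pow_eq_if_image_eq:
  assumes "b \<in> carrier B" "b' \<in> carrier B" "f b = f b'"
  shows "b [^]\<^bsub>B\<^esub> n = b' [^]\<^bsub>B\<^esub> n"
proof -
  have "b \<otimes>\<^bsub>B\<^esub> inv\<^bsub>B\<^esub> b' \<in> kernel B A f"
    using assms by (simp add: kernel_def)
  then have "(b \<otimes>\<^bsub>B\<^esub> inv\<^bsub>B\<^esub> b') [^]\<^bsub>B\<^esub> n = \<one>\<^bsub>B\<^esub>"
    by (rule kernel_pow_eq_one)
  then have "b [^]\<^bsub>B\<^esub> n \<otimes>\<^bsub>B\<^esub> inv\<^bsub>B\<^esub> (b' [^]\<^bsub>B\<^esub> n) = \<one>\<^bsub>B\<^esub>"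
    using assms by (simp add: B.nat_pow_distrib B.nat_pow_inv)
  then show ?thesis
    using assms by (simp add: B.inv_solve_right')
qed

lemma pow_lift_image [simp]: "b \<in> carrier B \<Longrightarrow> pow_lift (f b) = b [^]\<^bsub>B\<^esub> n"
  unfolding pow_lift_def
  by (rule someI2[of _ b]) (auto intro: pow_eq_if_image_eq)

lemma pow_lift_hom: "pow_lift \<in> hom A B"
proof (rule homI)
  fix a assume "a \<in> carrier A"
  then obtain b where "b \<in> carrier B" "a = f b" using f_surj by blast
  then show "pow_lift a \<in> carrier B" by simp
next
  fix a a' assume "a \<in> carrier A" "a' \<in> carrier A"
  then obtain b b' where "b \<in> carrier B" "a = f b" "b' \<in> carrier B" "a' = f b'"
    using f_surj by blast
  then show "pow_lift (a \<otimes>\<^bsub>A\<^esub> a') = pow_lift a \<otimes>\<^bsub>B\<^esub> pow_lift a'"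
    by (simp flip: f.hom_mult add: B.nat_pow_distrib)
qed

lemma kernel_pow_lift_subset: "kernel A B pow_lift \<subseteq> torsion_subgroup A n"
proof
  fix a assume a: "a \<in> kernel A B pow_lift"
  then obtain b where b: "b \<in> carrier B" "a = f b"
    using f_surj by (auto simp: kernel_def)
  then have "b [^]\<^bsub>B\<^esub> n = \<one>\<^bsub>B\<^esub>"
    using a by (simp add: kernel_def)
  then have "a [^]\<^bsub>A\<^esub> n = \<one>\<^bsub>A\<^esub>"
    using b by (simp flip: f.hom_nat_pow)
  then show "a \<in> torsion_subgroup A n"
    using b(1) by (simp add: torsion_subgroup_def b(2))
qed

lemma image_pow_lift: "pow_lift ` carrier A = mult_subgroup B n"
  unfolding mult_subgroup_def f_surj[symmetric] image_image by simp

end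

theorem lemma4p1:
  fixes S :: "nat \<Rightarrow> 'm list set set"
    and A B C :: "'m list monoid"
    and kA kB kC :: nat
    and g f :: "'m list \<Rightarrow> 'm list"
  assumes struct: "structure_on S"
    and abA: "comm_group A" and abB: "comm_group B" and abC: "comm_group C"
    and dA: "definable_group S kA A" and dB: "definable_group S kB B"
    and dC: "definable_group S kC C"
    and g_hom: "g \<in> hom C B" and f_hom: "f \<in> hom B A"
    and dg: "definable_map S kC kB C g" and df: "definable_map S kB kA B f"
    and g_inj: "inj_on g (carrier C)"
    and exact: "g ` carrier C = kernel B A f"
    and f_surj: "f ` carrier B = carrier A"
    and finC: "finite (carrier C)"
    and fin_quot: "finite (rcosets\<^bsub>A\<^esub> (mult_subgroup A (group_exponent C)))"
    and fin_tors: "finite (torsion_subgroup A (group_exponent C))"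
  shows "\<exists>h. h \<in> hom A B \<and> definable_map S kA kB A h
             \<and> finite (kernel A B h)
             \<and> finite (rcosets\<^bsub>B\<^esub> (h ` carrier A))"
proof -
  interpret A: comm_group A by (rule abA)
  interpret B: comm_group B by (rule abB)
  interpret g: group_hom C B g
    by (simp add: group_hom_def group_hom_axioms_def comm_group.axioms(2)[OF abC] B.group_axioms g_hom)
  define n where "n = group_exponent C"
  have kernel_pow_eq_one: "x [^]\<^bsub>B\<^esub> n = \<one>\<^bsub>B\<^esub>" if "x \<in> kernel B A f" for x
    using g.hom_image_pow_group_exponent[OF finC] that unfolding n_def exact .
  interpret power_lift B A f n
    by (intro power_lift.intro B.comm_group_axioms A.group_axioms power_lift_axioms.intro
        f_hom f_surj kernel_pow_eq_one)
  have f_graph: "graph_on (carrier B) f \<in> S (kB + kA)"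
    using df by (simp add: definable_map_iff_graph_on)
  have pow_graph: "graph_on (carrier B) (\<lambda>b. b [^]\<^bsub>B\<^esub> n) \<in> S (kB + kB)"
    by (rule definable_pow_graph[OF struct dB B.group_axioms])
  have B_tuples: "carrier B \<subseteq> tuples kB"
    using dB by (simp add: definable_group_def)
  have "definable_map S kA kB A pow_lift"
    unfolding definable_map_iff_graph_on
    by (rule definable_graph_factor[OF struct f_graph pow_graph B_tuples f_surj pow_lift_image])
  moreover have "finite (kernel A B pow_lift)"
    using kernel_pow_lift_subset fin_tors finite_subset unfolding n_def by blast
  moreover have "finite (rcosets\<^bsub>B\<^esub> (pow_lift ` carrier A))"
  proof -
    have "finite (kernel B A f)"
      unfolding exact[symmetric] using finC by (rule finite_imageI)
    then show ?thesis
      unfolding image_pow_lift unfolding n_def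
      by (rule finite_rcosets_mult_subgroup_extension[OF abB abA f_hom f_surj _ fin_quot])
  qed
  ultimately show ?thesis
    using pow_lift_hom by blast
qed

end
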